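(* Let $k\ge 2$. The $3$-graph $\mathcal{E}\cup\mathcal{F}$ contains no three edges whose union has exactly $4$ vertices.
   Context: Let $A_1=\{v^1_1,\dots,v^1_{4k-3}\}$, $A_2=\{v^2_1,\dots,v^2_{4k-3}\}$ be disjoint sets and $v_1^3$ a further vertex. For $i\in[1,k-1]$ define the sets of $3$-edges (writing $xyz$ for $\{x,y,z\}$) $\mathcal{E}_{1,i}=\{v_{2i-1}^1v_j^2v_{j+1}^2 : j\in[2i-1,4k-2-2i]\}$, $\mathcal{E}_{2,i}=\{v_j^1v_{j+1}^1v_{4k-1-2i}^2 : j\in[2i-1,4k-2-2i]\}$, $\mathcal{E}_{3,i}=\{v_{4k-1-2i}^1v_j^2v_{j+1}^2 : j\in[2i+1,4k-2-2i]\}$, $\mathcal{E}_{4,i}=\{v_j^1v_{j+1}^1v_{2i+1}^2 : j\in[2i+1,4k-2-2i]\}$, $\mathcal{E}_i=\mathcal{E}_{1,i}\cup\mathcal{E}_{2,i}\cup\mathcal{E}_{3,i}\cup\mathcal{E}_{4,i}$, and $\mathcal{E}=\bigcup_{i=1}^{k-1}\mathcal{E}_i$. Let $\mathcal{F}=\{v_j^lv_{j+1}^lv_1^3 : j\in[1,4k-4],\ l\in\{1,2\}\}$. *)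

theory Defs
  imports Main
begin

definition v :: "nat \<Rightarrow> nat \<Rightarrow> nat \<times> nat" where
  "v l j = (l, j)"

definition E1 :: "nat \<Rightarrow> nat \<Rightarrow> (nat \<times> nat) set set" where
  "E1 k i = {{v 1 (2*i-1), v 2 j, v 2 (j+1)} | j. j \<in> {2*i-1 .. 4*k-2-2*i}}"

definition E2 :: "nat \<Rightarrow> nat \<Rightarrow> (nat \<times> nat) set set" where
  "E2 k i = {{v 1 j, v 1 (j+1), v 2 (4*k-1-2*i)} | j. j \<in> {2*i-1 .. 4*k-2-2*i}}"

definition E3 :: "nat \<Rightarrow> nat \<Rightarrow> (nat \<times> nat) set set" where
  "E3 k i = {{v 1 (4*k-1-2*i), v 2 j, v 2 (j+1)} | j. j \<in> {2*i+1 .. 4*k-2-2*i}}"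

definition E4 :: "nat \<Rightarrow> nat \<Rightarrow> (nat \<times> nat) set set" where
  "E4 k i = {{v 1 j, v 1 (j+1), v 2 (2*i+1)} | j. j \<in> {2*i+1 .. 4*k-2-2*i}}"

definition Ei :: "nat \<Rightarrow> nat \<Rightarrow> (nat \<times> nat) set set" where
  "Ei k i = E1 k i \<union> E2 k i \<union> E3 k i \<union> E4 k i"

definition EE :: "nat \<Rightarrow> (nat \<times> nat) set set" where
  "EE k = (\<Union>i\<in>{1..k-1}. Ei k i)"

definition FF :: "nat \<Rightarrow> (nat \<times> nat) set set" where
  "FF k = {{v l j, v l (j+1), v 3 1} | j l. j \<in> {1..4*k-4} \<and> l \<in> {1,2}}"

end

theory Submission
  imports Defs
begin

text \<open>Every edge consists of two consecutive vertices of one class and an odd-indexed vertex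
of another class. So it has exactly one vertex of even index, its pivot, and of its two other
vertices exactly one lies in the class of the pivot. Two distinct 3-sets inside a 4-set cover
it, so three such edges on four vertices share their pivot z. The three remaining vertices split
into those in the class of z (S) and the others (T); the three edges give three distinct pairs
in S \<times> T, which is impossible when |S| + |T| = 3.\<close>

definition pivot_edge :: "('a \<Rightarrow> bool) \<Rightarrow> ('a \<Rightarrow> 'b) \<Rightarrow> 'a set \<Rightarrow> bool" where
  "pivot_edge P f e \<longleftrightarrow>
     (\<exists>z p t. e = {z, p, t} \<and> P z \<and> \<not> P p \<and> \<not> P t \<and> f p = f z \<and> f t \<noteq> f z)"

lemma Un_eq_if_card_Suc:
  assumes "finite U" "A \<subseteq> U" "B \<subseteq> U" "card B = card A" "card U = Suc (card A)" "A \<noteq> B"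
  shows "A \<union> B = U"
proof -
  have "finite A" "finite B"
    using assms(1-3) finite_subset by blast+
  then have "\<not> B \<subseteq> A"
    using assms(4,6) card_subset_eq by metis
  then have "card A < card (A \<union> B)"
    using \<open>finite A\<close> \<open>finite B\<close> by (intro psubset_card_mono) auto
  moreover have "card (A \<union> B) \<le> card U"
    using assms(1-3) by (intro card_mono) auto
  ultimately show ?thesis
    using assms(1-3,5) by (intro card_subset_eq) auto
qed

lemma card_pivot_edge:
  assumes "pivot_edge P f e"
  shows "card e = 3"
  using assms unfolding pivot_edge_def by (metis card_3_iff)

lemma no_three_split_triples_on_four_vertices:
  assumes "e1 = {z, p1, t1}" "e2 = {z, p2, t2}" "e3 = {z, p3, t3}"
    and "z \<notin> {p1, p2, p3}" "f p1 = f z" "f p2 = f z" "f p3 = f z"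
    and "f t1 \<noteq> f z" "f t2 \<noteq> f z" "f t3 \<noteq> f z"
    and "e1 \<noteq> e2" "e1 \<noteq> e3" "e2 \<noteq> e3"
  shows "card (e1 \<union> e2 \<union> e3) \<noteq> 4"
proof
  define S where "S = {p1, p2, p3}"
  define T where "T = {t1, t2, t3}"
  assume "card (e1 \<union> e2 \<union> e3) = 4"
  moreover have "e1 \<union> e2 \<union> e3 = insert z (S \<union> T)" "S \<inter> T = {}" "z \<notin> S \<union> T"
    using assms(1-10) unfolding S_def T_def by auto
  moreover have "finite S" "finite T"
    unfolding S_def T_def by simp_all
  ultimately have card_S_T: "card S + card T = 3"
    by (simp add: card_Un_disjoint)
  have "(p1, t1) \<noteq> (p2, t2)" "(p1, t1) \<noteq> (p3, t3)" "(p2, t2) \<noteq> (p3, t3)"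
    using assms(1-3,11-13) by auto
  then have "card {(p1, t1), (p2, t2), (p3, t3)} = 3"
    by simp
  moreover have "{(p1, t1), (p2, t2), (p3, t3)} \<subseteq> S \<times> T"
    unfolding S_def T_def by auto
  ultimately have "3 \<le> card S * card T"
    using \<open>finite S\<close> \<open>finite T\<close> by (metis card_cartesian_product card_mono finite_SigmaI)
  moreover have "card S \<in> {0, 1, 2, 3}"
    using card_S_T by auto
  ultimately show False
    using card_S_T by auto
qed

lemma no_three_pivot_edges_on_four_vertices:
  assumes "pivot_edge P f e1" "pivot_edge P f e2" "pivot_edge P f e3"
    and "e1 \<noteq> e2" "e1 \<noteq> e3" "e2 \<noteq> e3"
  shows "card (e1 \<union> e2 \<union> e3) \<noteq> 4"
proof
  define U where "U = e1 \<union> e2 \<union> e3"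
  assume "card (e1 \<union> e2 \<union> e3) = 4"
  then have card_U: "card U = Suc 3"
    unfolding U_def by simp
  then have "finite U"
    by (intro card_ge_0_finite) simp
  obtain z1 p1 t1 where e1: "e1 = {z1, p1, t1}" "P z1" "\<not> P p1" "\<not> P t1" "f p1 = f z1" "f t1 \<noteq> f z1"
    using assms(1) unfolding pivot_edge_def by blast
  obtain z2 p2 t2 where e2: "e2 = {z2, p2, t2}" "P z2" "\<not> P p2" "\<not> P t2" "f p2 = f z2" "f t2 \<noteq> f z2"
    using assms(2) unfolding pivot_edge_def by blast
  obtain z3 p3 t3 where e3: "e3 = {z3, p3, t3}" "P z3" "\<not> P p3" "\<not> P t3" "f p3 = f z3" "f t3 \<noteq> f z3"
    using assms(3) unfolding pivot_edge_def by blast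
  have card_e: "card e1 = 3" "card e2 = 3" "card e3 = 3"
    using assms(1-3) by (auto intro: card_pivot_edge)
  have sub_U: "e1 \<subseteq> U" "e2 \<subseteq> U" "e3 \<subseteq> U"
    unfolding U_def by auto
  have "e1 \<union> e2 = U" "e1 \<union> e3 = U" "e2 \<union> e3 = U"
    by (rule Un_eq_if_card_Suc[OF \<open>finite U\<close>]; use sub_U card_U card_e assms(4-6) in simp)+
  then have "\<forall>x\<in>U. P x \<longrightarrow> x = z1 \<or> x = z2" "\<forall>x\<in>U. P x \<longrightarrow> x = z1 \<or> x = z3"
    "\<forall>x\<in>U. P x \<longrightarrow> x = z2 \<or> x = z3"
    using e1 e2 e3 by auto
  moreover have "z1 \<in> U" "z2 \<in> U" "z3 \<in> U"
    using e1 e2 e3 sub_U by auto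
  ultimately have "z2 = z1" "z3 = z1"
    using e1(2) e2(2) e3(2) by metis+
  then show False
    using no_three_split_triples_on_four_vertices[of e1 z1 p1 t1 e2 p2 t2 e3 p3 t3 f]
      e1 e2 e3 assms(4-6) \<open>card (e1 \<union> e2 \<union> e3) = 4\<close> by auto
qed

lemma pivot_edge_consecutive_pair:
  assumes "l \<noteq> l'" "odd m"
  shows "pivot_edge (\<lambda>x. even (snd x)) fst {(l', m), (l, j), (l, j + 1)}"
proof (cases "even j")
  case True
  then show ?thesis
    using assms unfolding pivot_edge_def
    by (intro exI[of _ "(l, j)"] exI[of _ "(l, j + 1)"] exI[of _ "(l', m)"]) auto
next
  case False
  then show ?thesis
    using assms unfolding pivot_edge_def
    by (intro exI[of _ "(l, j + 1)"] exI[of _ "(l, j)"] exI[of _ "(l', m)"]) auto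
qed

lemma pivot_edge_EE_FF:
  assumes "e \<in> EE k \<union> FF k"
  shows "pivot_edge (\<lambda>x. even (snd x)) fst e"
proof -
  have shape: "{(l, j), (l, j + 1), (l', m)} = {(l', m), (l, j), (l, j + 1)}" for l j l' m :: nat
    by auto
  show ?thesis
    using assms unfolding EE_def Ei_def E1_def E2_def E3_def E4_def FF_def v_def
    by (auto simp only: shape intro!: pivot_edge_consecutive_pair) auto
qed

theorem lemma3p1:
  fixes k :: nat
  assumes "k \<ge> 2"
  shows "\<not> (\<exists>e1 e2 e3. e1 \<in> EE k \<union> FF k \<and> e2 \<in> EE k \<union> FF k \<and> e3 \<in> EE k \<union> FF k
           \<and> e1 \<noteq> e2 \<and> e1 \<noteq> e3 \<and> e2 \<noteq> e3 \<and> card (e1 \<union> e2 \<union> e3) = 4)"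
  using no_three_pivot_edges_on_four_vertices pivot_edge_EE_FF by metis

end
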